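(* Let $L$ be a C-lattice. The following are equivalent: (i) $L$ is sharp; (ii) $a=(a:(a:b))(a:b)$ for all $a,b\in L$; (iii) $(a:b)$ divides $a$ for all $a,b\in L$; (iv) $(a:b)$ divides $a$ whenever $a,b\in L$ satisfy $0<a<b<1$ and $a$ is not a prime element.
   Context: A multiplicative lattice is a complete lattice $(L,\le)$ with bottom $0$ and top $1$ which is also a commutative monoid with identity $1$ such that $a(\bigvee_\alpha b_\alpha)=\bigvee_\alpha(ab_\alpha)$ for all $a,b_\alpha\in L$. For $x,y\in L$, $(y:x)=\bigvee\{a\in L: ax\le y\}$. An element $c$ is compact if $c\le\bigvee S$ implies $c\le\bigvee T$ for some finite $T\subseteq S$. A C-lattice is a multiplicative lattice in which $1$ is compact, the product of two compact elements is compact, and every element is a join of compact elements. A proper element $p\neq 1$ is prime if $xy\le p$ implies $x\le p$ or $y\le p$. We say $a$ divides $b$ if $b=ac$ for some $c\in L$. $L$ is sharp if whenever $a_1a_2\le b$ with $a_1,a_2,b\in L$, there exist $b_1,b_2\in L$ with $a_i\le b_i$ ($i=1,2$) and $b=b_1b_2$. *)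

theory Defs
  imports Main
begin

definition mult_lattice :: "('a::complete_lattice \<Rightarrow> 'a \<Rightarrow> 'a) \<Rightarrow> bool" where
  "mult_lattice m \<longleftrightarrow>
     (\<forall>a b c. m (m a b) c = m a (m b c)) \<and>
     (\<forall>a b. m a b = m b a) \<and>
     (\<forall>a. m a top = a) \<and>
     (\<forall>a B. m a (Sup B) = Sup ((\<lambda>b. m a b) ` B))"

definition residual :: "('a::complete_lattice \<Rightarrow> 'a \<Rightarrow> 'a) \<Rightarrow> 'a \<Rightarrow> 'a \<Rightarrow> 'a" where
  "residual m y x = Sup {a. m a x \<le> y}"

definition compact_elem :: "'a::complete_lattice \<Rightarrow> bool" where
  "compact_elem c \<longleftrightarrow> (\<forall>S. c \<le> Sup S \<longrightarrow> (\<exists>T. T \<subseteq> S \<and> finite T \<and> c \<le> Sup T))"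

definition C_lattice :: "('a::complete_lattice \<Rightarrow> 'a \<Rightarrow> 'a) \<Rightarrow> bool" where
  "C_lattice m \<longleftrightarrow> mult_lattice m \<and> compact_elem (top::'a) \<and>
     (\<forall>a b. compact_elem a \<longrightarrow> compact_elem b \<longrightarrow> compact_elem (m a b)) \<and>
     (\<forall>x::'a. x = Sup {c. compact_elem c \<and> c \<le> x})"

definition prime_elem :: "('a::complete_lattice \<Rightarrow> 'a \<Rightarrow> 'a) \<Rightarrow> 'a \<Rightarrow> bool" where
  "prime_elem m p \<longleftrightarrow> p \<noteq> top \<and> (\<forall>x y. m x y \<le> p \<longrightarrow> x \<le> p \<or> y \<le> p)"

definition divides :: "('a::complete_lattice \<Rightarrow> 'a \<Rightarrow> 'a) \<Rightarrow> 'a \<Rightarrow> 'a \<Rightarrow> bool" where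
  "divides m a b \<longleftrightarrow> (\<exists>c. b = m a c)"

definition sharp :: "('a::complete_lattice \<Rightarrow> 'a \<Rightarrow> 'a) \<Rightarrow> bool" where
  "sharp m \<longleftrightarrow> (\<forall>a1 a2 b. m a1 a2 \<le> b \<longrightarrow>
      (\<exists>b1 b2. a1 \<le> b1 \<and> a2 \<le> b2 \<and> b = m b1 b2))"

end

theory Submission
  imports Defs
begin

text \<open>Sharpness applied to \<open>(a:b) b \<le> a\<close> gives \<open>a = b\<^sub>1 b\<^sub>2\<close> with \<open>(a:b) \<le> b\<^sub>1\<close> and
  \<open>b \<le> b\<^sub>2\<close>; then \<open>b\<^sub>1 b \<le> a\<close> forces \<open>b\<^sub>1 = (a:b)\<close>, so \<open>(a:b)\<close> divides \<open>a\<close>. Conversely, if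
  \<open>a\<^sub>1 a\<^sub>2 \<le> b\<close> then \<open>a\<^sub>1 \<le> (b:a\<^sub>2)\<close> and \<open>a\<^sub>2 \<le> (b:(b:a\<^sub>2))\<close>, and their product is \<open>b\<close> as soon as
  \<open>(b:a\<^sub>2)\<close> divides \<open>b\<close>, because \<open>c\<close> divides \<open>a\<close> exactly when \<open>a = (a:c) c\<close>. For (iv) use
  \<open>(a:b) = (a:a \<squnion> b)\<close>: in each excluded case (\<open>a = 0\<close>, \<open>b \<le> a\<close>, \<open>a \<squnion> b = 1\<close>, \<open>a\<close> prime) either
  \<open>a = 0\<close> or the residual is \<open>1\<close> or \<open>a\<close>, which divide \<open>a\<close> trivially.\<close>

locale multiplicative_lattice =
  fixes mult :: "'a::complete_lattice \<Rightarrow> 'a \<Rightarrow> 'a"  (infixl \<open>\<cdot>\<close> 70)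
  assumes mult_lattice: "mult_lattice (\<cdot>)"
begin

lemma mult_commute: "a \<cdot> b = b \<cdot> a"
  using mult_lattice unfolding mult_lattice_def by blast

lemma mult_top_right [simp]: "a \<cdot> top = a"
  using mult_lattice unfolding mult_lattice_def by blast

lemma mult_top_left [simp]: "top \<cdot> a = a"
  by (metis mult_commute mult_top_right)

lemma mult_Sup: "a \<cdot> Sup B = (SUP b\<in>B. a \<cdot> b)"
  using mult_lattice unfolding mult_lattice_def by blast

lemma mult_bot_right [simp]: "a \<cdot> bot = bot"
  using mult_Sup[of a "{}"] by simp

lemma mult_sup_right: "a \<cdot> sup b c = sup (a \<cdot> b) (a \<cdot> c)"
  using mult_Sup[of a "{b, c}"] by simp

lemma mult_mono_right: "b \<le> b' \<Longrightarrow> a \<cdot> b \<le> a \<cdot> b'"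
  by (metis mult_sup_right sup.absorb_iff2)

lemma mult_mono: "a \<le> a' \<Longrightarrow> b \<le> b' \<Longrightarrow> a \<cdot> b \<le> a' \<cdot> b'"
  by (metis mult_commute mult_mono_right order_trans)

lemma mult_le_left: "a \<cdot> b \<le> a"
  using mult_mono_right[of b top a] by simp

lemma mult_le_right: "a \<cdot> b \<le> b"
  by (metis mult_commute mult_le_left)

lemma residual_mult_le: "residual (\<cdot>) a b \<cdot> b \<le> a"
proof -
  have "b \<cdot> residual (\<cdot>) a b = (SUP c\<in>{c. c \<cdot> b \<le> a}. b \<cdot> c)"
    unfolding residual_def by (rule mult_Sup)
  also have "\<dots> \<le> a"
    by (rule SUP_least) (metis mem_Collect_eq mult_commute)
  finally show ?thesis
    by (metis mult_commute)
qed

lemma le_residual_iff: "c \<le> residual (\<cdot>) a b \<longleftrightarrow> c \<cdot> b \<le> a"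
proof
  assume "c \<le> residual (\<cdot>) a b"
  then show "c \<cdot> b \<le> a"
    by (meson mult_mono order_refl order_trans residual_mult_le)
qed (simp add: residual_def Sup_upper)

lemma residual_eq_top_iff: "residual (\<cdot>) a b = top \<longleftrightarrow> b \<le> a"
  using le_residual_iff[of top a b] by (simp add: top_unique)

lemma residual_top [simp]: "residual (\<cdot>) a top = a"
  by (rule antisym) (use residual_mult_le[of a top] le_residual_iff[of a a top] in simp_all)

lemma residual_sup_self: "residual (\<cdot>) a (sup a b) = residual (\<cdot>) a b"
proof -
  have "c \<le> residual (\<cdot>) a (sup a b) \<longleftrightarrow> c \<le> residual (\<cdot>) a b" for c
    by (simp add: le_residual_iff mult_sup_right mult_le_right)
  then show ?thesis
    by (meson antisym order_refl)
qed

lemma residual_prime: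
  assumes "prime_elem (\<cdot>) p" and "\<not> b \<le> p"
  shows "residual (\<cdot>) p b = p"
proof (rule antisym)
  show "residual (\<cdot>) p b \<le> p"
    using assms residual_mult_le unfolding prime_elem_def by blast
  show "p \<le> residual (\<cdot>) p b"
    by (simp add: le_residual_iff mult_le_left)
qed

lemma divides_top_left: "divides (\<cdot>) top a"
  unfolding divides_def by (metis mult_top_left)

lemma divides_refl: "divides (\<cdot>) a a"
  unfolding divides_def by (metis mult_top_right)

lemma divides_bot: "divides (\<cdot>) c bot"
  unfolding divides_def by (metis mult_bot_right)

lemma divides_iff_residual_factor: "divides (\<cdot>) c a \<longleftrightarrow> a = residual (\<cdot>) a c \<cdot> c"
proof
  assume "divides (\<cdot>) c a"
  then obtain d where d: "a = c \<cdot> d"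
    unfolding divides_def by blast
  then have "d \<le> residual (\<cdot>) a c"
    by (simp add: le_residual_iff mult_commute)
  then have "a \<le> residual (\<cdot>) a c \<cdot> c"
    using d mult_commute mult_mono by (metis order_refl)
  then show "a = residual (\<cdot>) a c \<cdot> c"
    using residual_mult_le antisym by blast
next
  assume "a = residual (\<cdot>) a c \<cdot> c"
  then show "divides (\<cdot>) c a"
    unfolding divides_def by (metis mult_commute)
qed

lemma sharp_imp_residual_divides:
  assumes "sharp (\<cdot>)"
  shows "divides (\<cdot>) (residual (\<cdot>) a b) a"
proof -
  obtain b1 b2 where b1: "residual (\<cdot>) a b \<le> b1" and b2: "b \<le> b2" and a: "a = b1 \<cdot> b2"
    using assms residual_mult_le unfolding sharp_def by blast
  have "b1 \<le> residual (\<cdot>) a b"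
    unfolding le_residual_iff a using b2 by (rule mult_mono_right)
  then have "b1 = residual (\<cdot>) a b"
    using b1 by (rule antisym)
  with a show ?thesis
    unfolding divides_def by metis
qed

lemma sharp_if_residual_divides:
  assumes "\<And>a b. divides (\<cdot>) (residual (\<cdot>) a b) a"
  shows "sharp (\<cdot>)"
  unfolding sharp_def
proof (intro allI impI)
  fix a1 a2 b
  assume "a1 \<cdot> a2 \<le> b"
  define c where "c = residual (\<cdot>) b a2"
  have "a1 \<le> c"
    unfolding c_def le_residual_iff by fact
  moreover have "a2 \<le> residual (\<cdot>) b c"
    unfolding le_residual_iff c_def by (metis mult_commute residual_mult_le)
  moreover have "b = c \<cdot> residual (\<cdot>) b c"
    using assms[of b a2] divides_iff_residual_factor unfolding c_def by (metis mult_commute)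
  ultimately show "\<exists>b1 b2. a1 \<le> b1 \<and> a2 \<le> b2 \<and> b = b1 \<cdot> b2"
    by blast
qed

lemma residual_divides_if_nontrivial:
  assumes nontrivial: "\<And>a b. bot < a \<Longrightarrow> a < b \<Longrightarrow> b < top \<Longrightarrow> \<not> prime_elem (\<cdot>) a
      \<Longrightarrow> divides (\<cdot>) (residual (\<cdot>) a b) a"
  shows "divides (\<cdot>) (residual (\<cdot>) a b) a"
proof (cases "a = bot \<or> b \<le> a \<or> sup a b = top \<or> prime_elem (\<cdot>) a")
  case True
  then show ?thesis
    using divides_bot divides_top_left divides_refl residual_eq_top_iff[of a b]
      residual_prime[of a b] residual_sup_self[of a b] by auto
next
  case False
  then have "bot < a" "a < sup a b" "sup a b < top" "\<not> prime_elem (\<cdot>) a"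
    by (auto simp: bot.not_eq_extremum top.not_eq_extremum less_le_not_le)
  then show ?thesis
    using nontrivial residual_sup_self by metis
qed

end

theorem proposition2p1:
  fixes m :: "'a::complete_lattice \<Rightarrow> 'a \<Rightarrow> 'a"
  assumes "C_lattice m"
  shows "(sharp m \<longleftrightarrow> (\<forall>a b. a = m (residual m a (residual m a b)) (residual m a b)))
       \<and> ((\<forall>a b. a = m (residual m a (residual m a b)) (residual m a b))
            \<longleftrightarrow> (\<forall>a b. divides m (residual m a b) a))
       \<and> ((\<forall>a b. divides m (residual m a b) a)
            \<longleftrightarrow> (\<forall>a b. bot < a \<and> a < b \<and> b < top \<and> \<not> prime_elem m a
                    \<longrightarrow> divides m (residual m a b) a))"
proof -
  interpret multiplicative_lattice m
    using assms unfolding C_lattice_def by unfold_locales blast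
  have ii_iii: "(\<forall>a b. a = m (residual m a (residual m a b)) (residual m a b))
      \<longleftrightarrow> (\<forall>a b. divides m (residual m a b) a)"
    by (simp add: divides_iff_residual_factor)
  have i_iii: "sharp m \<longleftrightarrow> (\<forall>a b. divides m (residual m a b) a)"
    using sharp_imp_residual_divides sharp_if_residual_divides by blast
  have iii_iv: "(\<forall>a b. divides m (residual m a b) a)
      \<longleftrightarrow> (\<forall>a b. bot < a \<and> a < b \<and> b < top \<and> \<not> prime_elem m a
              \<longrightarrow> divides m (residual m a b) a)"
    using residual_divides_if_nontrivial by blast
  show ?thesis
    using ii_iii i_iii iii_iv by blast
qed

end
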